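(* Let $N\ge 2$ and $K\ge 1$ be integers, $\mathbf{h}_1,\dots,\mathbf{h}_K\in\mathbb{C}^N$, $\Gamma_1,\dots,\Gamma_K>0$, $\sigma_C^2>0$, $P_T>0$, and set $\mathbf{Q}_k=\mathbf{h}_k\mathbf{h}_k^\dagger$, $\rho_k=1+\Gamma_k^{-1}$. Consider the problem $$\min_{\mathbf{W}_1,\dots,\mathbf{W}_{K+1}}\ \mathrm{tr}\Big(\big(\textstyle\sum_{k=1}^{K+1}\mathbf{W}_k\big)^{-1}\Big)$$ subject to $\rho_k\langle\mathbf{Q}_k,\mathbf{W}_k\rangle-\sum_{i=1}^{K+1}\langle\mathbf{Q}_k,\mathbf{W}_i\rangle\ge\sigma_C^2$ for $k=1,\dots,K$, $\sum_{k=1}^{K+1}\mathrm{tr}(\mathbf{W}_k)\le P_T$, and $\mathbf{W}_k\in\mathbb{H}_+^{N\times N}$ for $k=1,\dots,K+1$, where the objective is $+\infty$ if $\sum_k\mathbf{W}_k$ is singular. Suppose this problem has an optimal solution with finite objective value. Then there exists an optimal solution at which all $K+1$ inequality constraints (the $K$ SINR constraints and the power constraint) hold with equality.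
   Context: $\mathbb{H}_+^{N\times N}$ is the set of $N\times N$ Hermitian positive semidefinite matrices; $\langle\mathbf{A},\mathbf{B}\rangle=\mathrm{tr}(\mathbf{A}^\dagger\mathbf{B})$. *)

theory Defs
  imports "HOL-Analysis.Analysis"
begin

definition adj :: "complex^'n^'n \<Rightarrow> complex^'n^'n" where
  "adj A = (\<chi> i j. cnj (A $ j $ i))"

definition outer :: "complex^'n \<Rightarrow> complex^'n^'n" where
  "outer h = (\<chi> i j. h $ i * cnj (h $ j))"

definition inner_mat :: "complex^'n^'n \<Rightarrow> complex^'n^'n \<Rightarrow> complex" where
  "inner_mat A B = trace (adj A ** B)"

definition hpsd :: "complex^'n^'n \<Rightarrow> bool" where
  "hpsd A \<longleftrightarrow> adj A = A \<and> (\<forall>x::complex^'n. let q = (\<Sum>i\<in>UNIV. cnj (x $ i) * (A *v x) $ i) in 0 \<le> Re q \<and> Im q = 0)"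

definition obj :: "nat \<Rightarrow> (nat \<Rightarrow> complex^'n^'n) \<Rightarrow> ereal" where
  "obj K W = (let S = (\<Sum>k=1..K+1. W k) in
     if invertible S then ereal (Re (trace (matrix_inv S))) else \<infinity>)"

definition feasible ::
  "nat \<Rightarrow> (nat \<Rightarrow> complex^'n) \<Rightarrow> (nat \<Rightarrow> real) \<Rightarrow> real \<Rightarrow> real \<Rightarrow> (nat \<Rightarrow> complex^'n^'n) \<Rightarrow> bool" where
  "feasible K h \<Gamma> \<sigma>2 PT W \<longleftrightarrow>
     (\<forall>k\<in>{1..K}. (1 + 1 / \<Gamma> k) * Re (inner_mat (outer (h k)) (W k))
         - (\<Sum>i=1..K+1. Re (inner_mat (outer (h k)) (W i))) \<ge> \<sigma>2)
   \<and> (\<Sum>k=1..K+1. Re (trace (W k))) \<le> PT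
   \<and> (\<forall>k\<in>{1..K+1}. hpsd (W k))"

definition optimal ::
  "nat \<Rightarrow> (nat \<Rightarrow> complex^'n) \<Rightarrow> (nat \<Rightarrow> real) \<Rightarrow> real \<Rightarrow> real \<Rightarrow> (nat \<Rightarrow> complex^'n^'n) \<Rightarrow> bool" where
  "optimal K h \<Gamma> \<sigma>2 PT W \<longleftrightarrow> feasible K h \<Gamma> \<sigma>2 PT W \<and>
     (\<forall>V. feasible K h \<Gamma> \<sigma>2 PT V \<longrightarrow> obj K W \<le> obj K V)"

end

theory Submission
  imports Defs
begin

text \<open>
  The SINR margins and the total power depend on the beamformers only through their own signal
  terms \<open>\<langle>Q\<^sub>k, W\<^sub>k\<rangle>\<close> and the sum \<open>S = \<Sum>\<^sub>i W\<^sub>i\<close>, while the objective depends on \<open>S\<close> alone.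
  Scaling an optimal solution by \<open>c = P\<^sub>T / tr S \<ge> 1\<close> multiplies every margin by \<open>c\<close> and divides the
  objective by \<open>c\<close>, so it stays optimal with full power (\<open>tr S > 0\<close> because \<open>S\<close> is positive
  semidefinite and invertible). Then replacing each \<open>W\<^sub>k\<close> by \<open>t\<^sub>k W\<^sub>k\<close>, with \<open>t\<^sub>k \<in> [0,1]\<close> chosen to
  make the \<open>k\<close>-th SINR constraint tight, and adding the removed parts \<open>(1 - t\<^sub>k) W\<^sub>k\<close> to \<open>W\<^sub>K\<^sub>+\<^sub>1\<close>
  leaves \<open>S\<close>, hence the objective and the power, unchanged.
\<close>

lemma trace_scaleR: "trace (c *\<^sub>R A) = c *\<^sub>R trace (A :: 'a::real_algebra_1^'n^'n)"
  by (simp add: trace_def scaleR_sum_right)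

lemma trace_sum: "trace (\<Sum>i\<in>I. f i) = (\<Sum>i\<in>I. trace (f i :: 'a::comm_semiring_1^'n^'n))"
  unfolding trace_def sum_component by (rule sum.swap)

lemma adj_add: "adj (A + B) = adj A + adj B"
  by (simp add: adj_def vec_eq_iff)

lemma adj_scaleR: "adj (c *\<^sub>R A) = c *\<^sub>R adj A"
  by (simp add: adj_def vec_eq_iff)

definition quad_form :: "complex^'n^'n \<Rightarrow> complex^'n \<Rightarrow> complex" where
  "quad_form A x = (\<Sum>i\<in>UNIV. cnj (x $ i) * (A *v x) $ i)"

lemma quad_form_add: "quad_form (A + B) x = quad_form A x + quad_form B x"
  by (simp add: quad_form_def matrix_vector_mult_add_rdistrib distrib_left sum.distrib)

lemma quad_form_scaleR: "quad_form (c *\<^sub>R A) x = c *\<^sub>R quad_form A x"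
  by (simp add: quad_form_def matrix_vector_mult_def scaleR_conv_of_real[where 'a=complex] sum_distrib_left mult_ac)

lemma quad_form_sum: "quad_form (\<Sum>i\<in>I. f i) x = (\<Sum>i\<in>I. quad_form (f i) x)"
  by (induction I rule: infinite_finite_induct) (simp_all add: quad_form_add quad_form_def[of 0])

lemma hpsd_iff_quad_form:
  "hpsd A \<longleftrightarrow> adj A = A \<and> (\<forall>x. 0 \<le> Re (quad_form A x) \<and> Im (quad_form A x) = 0)"
  by (simp add: hpsd_def quad_form_def Let_def)

lemma hpsd_add: "hpsd A \<Longrightarrow> hpsd B \<Longrightarrow> hpsd (A + B)"
  by (simp add: hpsd_iff_quad_form adj_add quad_form_add)

lemma hpsd_scaleR: "0 \<le> c \<Longrightarrow> hpsd A \<Longrightarrow> hpsd (c *\<^sub>R A)"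
  by (simp add: hpsd_iff_quad_form adj_scaleR quad_form_scaleR)

lemma hpsd_0: "hpsd 0"
  by (simp add: hpsd_iff_quad_form adj_def quad_form_def vec_eq_iff)

lemma hpsd_sum: "(\<And>i. i \<in> I \<Longrightarrow> hpsd (f i)) \<Longrightarrow> hpsd (\<Sum>i\<in>I. f i)"
  by (induction I rule: infinite_finite_induct) (auto simp: hpsd_0 hpsd_add)

lemma inner_mat_outer: "inner_mat (outer h) A = quad_form A h"
  unfolding inner_mat_def quad_form_def trace_def adj_def outer_def
  by (simp add: matrix_matrix_mult_def matrix_vector_mult_def sum_distrib_left mult_ac; subst sum.swap; simp add: mult_ac)

lemma matrix_inv_right: "invertible A \<Longrightarrow> A ** matrix_inv A = mat 1"
  and matrix_inv_left: "invertible A \<Longrightarrow> matrix_inv A ** A = mat 1"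
  unfolding invertible_def matrix_inv_def by (metis (mono_tags, lifting) someI_ex)+

lemma matrix_inv_unique:
  fixes A :: "'a::semiring_1^'n^'n"
  assumes "A ** B = mat 1" "B ** A = mat 1"
  shows "matrix_inv A = B"
proof -
  have "invertible A" using assms unfolding invertible_def by blast
  have "matrix_inv A = (matrix_inv A ** A) ** B"
    by (simp add: assms(1) flip: matrix_mul_assoc)
  also have "\<dots> = B" by (simp add: matrix_inv_left[OF \<open>invertible A\<close>])
  finally show ?thesis .
qed

lemma matrix_inv_scaleR:
  fixes S :: "'a::real_algebra_1^'n^'n"
  assumes "c \<noteq> 0" "invertible S"
  shows "matrix_inv (c *\<^sub>R S) = inverse c *\<^sub>R matrix_inv S"
  by (rule matrix_inv_unique)
    (simp_all add: assms matrix_scalar_ac matrix_inv_left matrix_inv_right flip: scalar_matrix_assoc)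

lemma matrix_vector_mult_axis: "(A *v axis j t) $ k = A $ k $ j * t"
  by (simp add: matrix_vector_mult_def axis_def if_distrib cong: if_cong)

lemma sum_cnj_axis_mult: "(\<Sum>k\<in>UNIV. cnj (axis i a $ k) * v $ k) = cnj a * v $ i"
proof -
  have "(\<Sum>k\<in>UNIV. cnj (axis i a $ k) * v $ k) = (\<Sum>k\<in>UNIV. if k = i then cnj a * v $ k else 0)"
    by (rule sum.cong) (auto simp: axis_def)
  then show ?thesis by simp
qed

lemma quad_form_axis: "quad_form A (axis i 1) = A $ i $ i"
  unfolding quad_form_def sum_cnj_axis_mult by (simp add: matrix_vector_mult_axis)

lemma quad_form_two_axes:
  "quad_form A (axis i 1 + axis j t) = A$i$i + A$i$j * t + cnj t * A$j$i + cnj t * t * A$j$j"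
  unfolding quad_form_def vector_add_component complex_cnj_add distrib_right sum.distrib sum_cnj_axis_mult
  by (simp add: matrix_vector_right_distrib matrix_vector_mult_axis algebra_simps)

lemma hpsd_entry_adj:
  assumes "hpsd A"
  shows "A $ j $ i = cnj (A $ i $ j)"
proof -
  have "A $ j $ i = adj A $ j $ i" using assms by (simp add: hpsd_def)
  then show ?thesis by (simp add: adj_def)
qed

lemma hpsd_diag:
  assumes "hpsd A"
  shows "0 \<le> Re (A $ i $ i) \<and> Im (A $ i $ i) = 0"
proof -
  have "0 \<le> Re (quad_form A (axis i 1)) \<and> Im (quad_form A (axis i 1)) = 0"
    using assms by (simp add: hpsd_iff_quad_form)
  then show ?thesis by (simp only: quad_form_axis)
qed

lemma hpsd_eq_0_if_diag_0:
  assumes "hpsd A" and diag: "\<And>i. Re (A $ i $ i) = 0"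
  shows "A = 0"
proof -
  have "A $ i $ j = 0" for i j
  proof (cases "i = j")
    case True
    then show ?thesis using hpsd_diag[OF \<open>hpsd A\<close>] diag by (simp add: complex_eq_iff)
  next
    case False
    let ?a = "A $ i $ j"
    \<comment> \<open>Test the form on \<open>e\<^sub>i - a\<^sup>* e\<^sub>j\<close>: its value is \<open>-2|a|\<^sup>2\<close> once the diagonal vanishes.\<close>
    have "0 \<le> Re (quad_form A (axis i 1 + axis j (- cnj ?a)))"
      using \<open>hpsd A\<close> by (simp add: hpsd_iff_quad_form)
    also have "\<dots> = - 2 * (cmod ?a)\<^sup>2"
      unfolding quad_form_two_axes hpsd_entry_adj[OF \<open>hpsd A\<close>, of j i] using diag
      by (simp add: algebra_simps complex_mult_cnj power2_eq_square cmod_def)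
    finally show ?thesis by simp
  qed
  then show ?thesis by (simp add: vec_eq_iff)
qed

lemma not_invertible_0: "\<not> invertible (0 :: 'a::semiring_1^'n^'n)"
proof
  assume "invertible (0 :: 'a^'n^'n)"
  then have "(0 :: 'a^'n^'n) = mat 1"
    unfolding invertible_def by (simp add: matrix_matrix_mult_def zero_vec_def)
  then have "(0 :: 'a^'n^'n) $ i $ i = mat 1 $ i $ i" for i by simp
  then show False by (simp add: mat_def)
qed

lemma hpsd_invertible_trace_pos:
  assumes "hpsd S" "invertible S"
  shows "0 < Re (trace S)"
proof -
  have diag: "0 \<le> Re (S $ i $ i)" for i using hpsd_diag[OF assms(1)] by blast
  have "S \<noteq> 0" using assms(2) not_invertible_0 by blast
  then obtain i where "Re (S $ i $ i) \<noteq> 0" using hpsd_eq_0_if_diag_0[OF assms(1)] by blast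
  then have "0 < Re (S $ i $ i)" using diag[of i] by linarith
  also have "\<dots> \<le> (\<Sum>j\<in>UNIV. Re (S $ j $ j))"
    by (rule member_le_sum) (simp_all add: diag)
  finally show ?thesis by (simp add: trace_def Re_sum)
qed

lemma hpsd_trace_matrix_inv_nonneg:
  assumes "hpsd S" "invertible S"
  shows "0 \<le> Re (trace (matrix_inv S))"
proof -
  let ?X = "matrix_inv S"
  \<comment> \<open>With \<open>y = X e\<^sub>i\<close> one has \<open>S y = e\<^sub>i\<close>, so \<open>X\<^sub>i\<^sub>i = y\<^sub>i\<close> is the conjugate of \<open>y\<^sup>* S y \<ge> 0\<close>.\<close>
  have "0 \<le> Re (?X $ i $ i)" for i
  proof -
    let ?y = "?X *v axis i 1"
    have "S *v ?y = axis i 1"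
      by (simp add: matrix_vector_mul_assoc matrix_inv_right[OF assms(2)])
    then have "quad_form S ?y = (\<Sum>k\<in>UNIV. cnj (?y $ k) * axis i 1 $ k)"
      unfolding quad_form_def by simp
    also have "\<dots> = (\<Sum>k\<in>UNIV. if k = i then cnj (?y $ k) else 0)"
      by (rule sum.cong) (auto simp: axis_def)
    also have "\<dots> = cnj (?X $ i $ i)"
      by (simp add: matrix_vector_mult_axis)
    finally have "quad_form S ?y = cnj (?X $ i $ i)" .
    moreover have "0 \<le> Re (quad_form S ?y)" using assms(1) by (simp add: hpsd_iff_quad_form)
    ultimately show ?thesis by simp
  qed
  then show ?thesis by (simp add: trace_def Re_sum sum_nonneg)
qed

definition sinr_margin ::
  "nat \<Rightarrow> (nat \<Rightarrow> complex^'n) \<Rightarrow> (nat \<Rightarrow> real) \<Rightarrow> (nat \<Rightarrow> complex^'n^'n) \<Rightarrow> nat \<Rightarrow> real" where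
  "sinr_margin K h \<Gamma> W k = (1 + 1 / \<Gamma> k) * Re (inner_mat (outer (h k)) (W k))
     - (\<Sum>i=1..K+1. Re (inner_mat (outer (h k)) (W i)))"

definition total_power :: "nat \<Rightarrow> (nat \<Rightarrow> complex^'n^'n) \<Rightarrow> real" where
  "total_power K W = (\<Sum>k=1..K+1. Re (trace (W k)))"

lemma feasible_iff:
  "feasible K h \<Gamma> \<sigma>2 PT W \<longleftrightarrow>
     (\<forall>k\<in>{1..K}. \<sigma>2 \<le> sinr_margin K h \<Gamma> W k) \<and> total_power K W \<le> PT
     \<and> (\<forall>k\<in>{1..K+1}. hpsd (W k))"
  by (simp add: feasible_def sinr_margin_def total_power_def)

lemma feasible_hpsd_sum: "feasible K h \<Gamma> \<sigma>2 PT W \<Longrightarrow> hpsd (\<Sum>k=1..K+1. W k)"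
  by (intro hpsd_sum) (simp add: feasible_def)

lemma sinr_margin_eq:
  "sinr_margin K h \<Gamma> W k =
     (1 + 1 / \<Gamma> k) * Re (quad_form (W k) (h k)) - Re (quad_form (\<Sum>i=1..K+1. W i) (h k))"
  by (simp only: sinr_margin_def inner_mat_outer quad_form_sum Re_sum)

lemma total_power_eq: "total_power K W = Re (trace (\<Sum>k=1..K+1. W k))"
  by (simp only: total_power_def trace_sum Re_sum)

lemma obj_cong: "(\<Sum>k=1..K+1. W k) = (\<Sum>k=1..K+1. V k) \<Longrightarrow> obj K W = obj K V"
  by (simp add: obj_def)

lemma optimal_if_obj_le:
  "optimal K h \<Gamma> \<sigma>2 PT W \<Longrightarrow> feasible K h \<Gamma> \<sigma>2 PT V \<Longrightarrow> obj K V \<le> obj K W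
    \<Longrightarrow> optimal K h \<Gamma> \<sigma>2 PT V"
  unfolding optimal_def by (meson order_trans)

lemma sinr_margin_scaleR:
  "sinr_margin K h \<Gamma> (\<lambda>i. c *\<^sub>R W i) k = c * sinr_margin K h \<Gamma> W k"
  unfolding sinr_margin_eq scaleR_sum_right[symmetric] quad_form_scaleR by (simp add: algebra_simps)

lemma total_power_scaleR: "total_power K (\<lambda>k. c *\<^sub>R W k) = c * total_power K W"
  unfolding total_power_eq scaleR_sum_right[symmetric] trace_scaleR by simp

lemma obj_scaleR_le:
  assumes "1 \<le> c" "hpsd (\<Sum>k=1..K+1. W k)" "invertible (\<Sum>k=1..K+1. W k)"
  shows "obj K (\<lambda>k. c *\<^sub>R W k) \<le> obj K W"
proof -
  let ?S = "\<Sum>k=1..K+1. W k"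
  have "0 \<le> Re (trace (matrix_inv ?S))"
    using assms(2,3) by (rule hpsd_trace_matrix_inv_nonneg)
  then have "Re (trace (matrix_inv ?S)) / c \<le> Re (trace (matrix_inv ?S))"
    using assms(1) by (simp add: divide_le_eq mult_le_cancel_left1)
  then show ?thesis
    using assms(1,3)
    by (simp add: obj_def scalar_invertible matrix_inv_scaleR trace_scaleR divide_inverse mult.commute
        flip: scaleR_sum_right)
qed

lemma feasible_scaleR:
  assumes "feasible K h \<Gamma> \<sigma>2 PT W" "0 \<le> \<sigma>2" "1 \<le> c" "c * total_power K W \<le> PT"
  shows "feasible K h \<Gamma> \<sigma>2 PT (\<lambda>k. c *\<^sub>R W k)"
  unfolding feasible_iff sinr_margin_scaleR total_power_scaleR
proof (intro conjI ballI)
  fix k assume "k \<in> {1..K}"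
  then have "\<sigma>2 \<le> sinr_margin K h \<Gamma> W k" using assms(1) by (simp add: feasible_iff)
  then show "\<sigma>2 \<le> c * sinr_margin K h \<Gamma> W k"
    using assms(2,3) by (metis mult_left_mono mult_right_mono mult_1 order_trans zero_le_one)
next
  fix k assume "k \<in> {1..K+1}"
  then show "hpsd (c *\<^sub>R W k)" using assms(1,3) by (simp add: feasible_iff hpsd_scaleR)
qed (fact assms(4))

lemma optimal_full_power:
  assumes opt: "optimal K h \<Gamma> \<sigma>2 PT W" and fin: "obj K W < \<infinity>" and "0 \<le> \<sigma>2"
  shows "\<exists>W'. optimal K h \<Gamma> \<sigma>2 PT W' \<and> total_power K W' = PT"
proof -
  let ?S = "\<Sum>k=1..K+1. W k"
  have feas: "feasible K h \<Gamma> \<sigma>2 PT W" using opt by (simp add: optimal_def)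
  have inv: "invertible ?S" using fin by (auto simp: obj_def Let_def split: if_splits)
  have psd: "hpsd ?S" using feas by (rule feasible_hpsd_sum)
  have pos: "0 < total_power K W"
    unfolding total_power_eq using psd inv by (rule hpsd_invertible_trace_pos)
  define c where "c = PT / total_power K W"
  have c: "1 \<le> c" "c * total_power K W = PT"
    using pos feas by (simp_all add: c_def feasible_iff)
  have "feasible K h \<Gamma> \<sigma>2 PT (\<lambda>k. c *\<^sub>R W k)"
    using feas \<open>0 \<le> \<sigma>2\<close> c by (intro feasible_scaleR) simp_all
  moreover have "obj K (\<lambda>k. c *\<^sub>R W k) \<le> obj K W"
    using c(1) psd inv by (rule obj_scaleR_le)
  ultimately have "optimal K h \<Gamma> \<sigma>2 PT (\<lambda>k. c *\<^sub>R W k)"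
    by (rule optimal_if_obj_le[OF opt])
  then show ?thesis using c(2) by (auto simp: total_power_scaleR)
qed

definition shift_to_last :: "nat \<Rightarrow> (nat \<Rightarrow> real) \<Rightarrow> (nat \<Rightarrow> 'a::real_vector) \<Rightarrow> nat \<Rightarrow> 'a" where
  "shift_to_last K t W k =
     (if k \<in> {1..K} then t k *\<^sub>R W k
      else if k = K + 1 then W (K + 1) + (\<Sum>j=1..K. (1 - t j) *\<^sub>R W j)
      else W k)"

lemma sum_shift_to_last: "(\<Sum>k=1..K+1. shift_to_last K t W k) = (\<Sum>k=1..K+1. W k)"
proof -
  have "(\<Sum>k=1..K. shift_to_last K t W k) = (\<Sum>k=1..K. t k *\<^sub>R W k)"
    by (rule sum.cong) (simp_all add: shift_to_last_def)
  moreover have "(\<Sum>k=1..K. t k *\<^sub>R W k) + (\<Sum>k=1..K. (1 - t k) *\<^sub>R W k) = (\<Sum>k=1..K. W k)"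
    by (simp add: algebra_simps flip: sum.distrib)
  ultimately show ?thesis by (simp add: shift_to_last_def algebra_simps)
qed

lemma hpsd_shift_to_last:
  assumes "\<And>k. k \<in> {1..K} \<Longrightarrow> 0 \<le> t k \<and> t k \<le> 1"
    and "\<And>k. k \<in> {1..K+1} \<Longrightarrow> hpsd (W k)" and "k \<in> {1..K+1}"
  shows "hpsd (shift_to_last K t W k)"
proof -
  have "hpsd (\<Sum>j=1..K. (1 - t j) *\<^sub>R W j)"
    using assms(1,2) by (intro hpsd_sum hpsd_scaleR) auto
  then show ?thesis
    using assms by (auto simp: shift_to_last_def intro: hpsd_scaleR hpsd_add)
qed

lemma optimal_tight_sinr:
  assumes opt: "optimal K h \<Gamma> \<sigma>2 PT W" and "0 < \<sigma>2"
  shows "\<exists>W'. optimal K h \<Gamma> \<sigma>2 PT W' \<and> (\<forall>k\<in>{1..K}. sinr_margin K h \<Gamma> W' k = \<sigma>2)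
           \<and> total_power K W' = total_power K W"
proof -
  let ?S = "\<Sum>k=1..K+1. W k"
  define a where "a k = Re (quad_form (W k) (h k))" for k
  define s where "s k = Re (quad_form ?S (h k))" for k
  define r where "r k = 1 + 1 / \<Gamma> k" for k
  define t where "t k = (\<sigma>2 + s k) / (r k * a k)" for k
  have feas: "feasible K h \<Gamma> \<sigma>2 PT W" using opt by (simp add: optimal_def)
  have margin_eq: "sinr_margin K h \<Gamma> W k = r k * a k - s k" for k
    by (simp only: sinr_margin_eq a_def s_def r_def)
  have margin: "\<sigma>2 \<le> r k * a k - s k" if "k \<in> {1..K}" for k
    using feas that unfolding feasible_iff margin_eq by blast
  have s_nonneg: "0 \<le> s k" for k
    using feasible_hpsd_sum[OF feas] by (simp add: s_def hpsd_iff_quad_form)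
  have pos: "0 < r k * a k" if "k \<in> {1..K}" for k
    using margin[OF that] s_nonneg[of k] \<open>0 < \<sigma>2\<close> by linarith
  have t: "0 \<le> t k \<and> t k \<le> 1" if "k \<in> {1..K}" for k
    using pos[OF that] margin[OF that] s_nonneg[of k] \<open>0 < \<sigma>2\<close>
    by (simp add: t_def divide_le_eq_1_pos)
  have tight_t: "r k * (t k * a k) = \<sigma>2 + s k" if "k \<in> {1..K}" for k
    using pos[OF that] by (auto simp: t_def mult.left_commute[of "r k"])
  let ?W' = "shift_to_last K t W"
  have sum: "(\<Sum>k=1..K+1. ?W' k) = ?S" by (rule sum_shift_to_last)
  have tight: "sinr_margin K h \<Gamma> ?W' k = \<sigma>2" if "k \<in> {1..K}" for k
    using that tight_t[OF that] unfolding sinr_margin_eq sum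
    by (simp add: shift_to_last_def quad_form_scaleR a_def s_def r_def)
  have "\<And>k. k \<in> {1..K+1} \<Longrightarrow> hpsd (?W' k)"
    using feas t by (intro hpsd_shift_to_last) (auto simp: feasible_iff)
  with feas tight have "feasible K h \<Gamma> \<sigma>2 PT ?W'"
    unfolding feasible_iff total_power_eq sum by simp
  then have "optimal K h \<Gamma> \<sigma>2 PT ?W'"
    by (rule optimal_if_obj_le[OF opt]) (simp add: obj_cong[OF sum])
  moreover have "total_power K ?W' = total_power K W" unfolding total_power_eq sum ..
  ultimately show ?thesis using tight by blast
qed

theorem theorem2:
  fixes K :: nat and h :: "nat \<Rightarrow> complex^'n" and \<Gamma> :: "nat \<Rightarrow> real"
    and \<sigma>2 PT :: real
  assumes "CARD('n) \<ge> 2" and "K \<ge> 1"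
    and "\<forall>k\<in>{1..K}. \<Gamma> k > 0" and "\<sigma>2 > 0" and "PT > 0"
    and "\<exists>W. optimal K h \<Gamma> \<sigma>2 PT W \<and> obj K W < \<infinity>"
  shows "\<exists>W. optimal K h \<Gamma> \<sigma>2 PT W
           \<and> (\<forall>k\<in>{1..K}. (1 + 1 / \<Gamma> k) * Re (inner_mat (outer (h k)) (W k))
                 - (\<Sum>i=1..K+1. Re (inner_mat (outer (h k)) (W i))) = \<sigma>2)
           \<and> (\<Sum>k=1..K+1. Re (trace (W k))) = PT"
proof -
  obtain W where "optimal K h \<Gamma> \<sigma>2 PT W" "obj K W < \<infinity>" using assms(6) by blast
  then obtain W' where opt': "optimal K h \<Gamma> \<sigma>2 PT W'" and "total_power K W' = PT"
    using optimal_full_power \<open>\<sigma>2 > 0\<close> less_imp_le by blast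
  then obtain W'' where "optimal K h \<Gamma> \<sigma>2 PT W''"
      "\<forall>k\<in>{1..K}. sinr_margin K h \<Gamma> W'' k = \<sigma>2" "total_power K W'' = PT"
    using optimal_tight_sinr[OF opt' \<open>\<sigma>2 > 0\<close>] by auto
  then show ?thesis unfolding sinr_margin_def total_power_def by blast
qed

end
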